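(* Let $m$ be an even non-negative integer and let $d_2$ be an $(m+3)\times(m+3)$ alternating matrix over a commutative ring, partitioned as $d_2=\begin{bmatrix}\varphi&\psi^T\\-\psi&\Phi\end{bmatrix}$ with $\varphi$ an $m\times m$ alternating matrix, $\Phi$ a $3\times3$ alternating matrix, and $\psi$ a $3\times m$ matrix. Then for each $\ell\in\{1,2,3\}$, $$\operatorname{Pf}_{m+\ell}(d_2)=\operatorname{Pf}_\ell(\psi\check\varphi\psi^T)+\operatorname{Pf}(\varphi)\operatorname{Pf}_\ell(\Phi).$$
   Context: An $s\times s$ matrix is alternating if it is skew-symmetric with zero diagonal. $\operatorname{Pf}$ is the Pfaffian ($0$ for odd size, $1$ for the empty matrix). For an odd-size alternating $\varphi$, $\operatorname{Pf}_\ell(\varphi)=(-1)^{\ell+1}\operatorname{Pf}(\varphi$ with row and column $\ell$ deleted$)$. For an even-size alternating $\varphi$, $\check\varphi$ is the alternating matrix with $(\check\varphi)_{i,j}=(-1)^{i+j}\operatorname{Pf}(\varphi$ with rows and columns $i,j$ deleted$)$ for $i<j$, zero diagonal, and $(\check\varphi)_{j,i}=-(\check\varphi)_{i,j}$ (when $m=0$, $\check\varphi$ is empty and the first term is $0$). *)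

theory Defs
  imports "HOL-Combinatorics.Permutations"
begin

text \<open>Square matrices of size n are represented as functions nat => nat => 'a,
  with (0-based) indices 0..n-1; entries outside this range are irrelevant.
  Row/column i of the paper (1-based) corresponds to index i-1 here.\<close>

definition alternating :: "nat \<Rightarrow> (nat \<Rightarrow> nat \<Rightarrow> 'a::comm_ring_1) \<Rightarrow> bool" where
  "alternating n A \<longleftrightarrow> (\<forall>i<n. \<forall>j<n. A j i = - A i j) \<and> (\<forall>i<n. A i i = 0)"

text \<open>Pfaffian of an n x n matrix: sum over permutations sigma of {0..<n} with
  sigma(2i) < sigma(2i+1) and sigma(0) < sigma(2) < sigma(4) < ... (i.e. perfect
  matchings), of sign(sigma) times the product of the matched entries.
  It is 0 for odd n and 1 for the empty matrix.\<close>

definition pfaffian :: "nat \<Rightarrow> (nat \<Rightarrow> nat \<Rightarrow> 'a::comm_ring_1) \<Rightarrow> 'a" where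
  "pfaffian n A = (if odd n then 0 else
     (\<Sum>\<sigma> \<in> {\<sigma>. \<sigma> permutes {0..<n} \<and>
                 (\<forall>i < n div 2. \<sigma> (2*i) < \<sigma> (2*i+1)) \<and>
                 (\<forall>i. i + 1 < n div 2 \<longrightarrow> \<sigma> (2*i) < \<sigma> (2*i+2))}.
        of_int (sign \<sigma>) * (\<Prod>i<n div 2. A (\<sigma> (2*i)) (\<sigma> (2*i+1)))))"

definition skip :: "nat \<Rightarrow> nat \<Rightarrow> nat" where
  "skip k i = (if i < k then i else i + 1)"

definition delete_rc :: "nat \<Rightarrow> (nat \<Rightarrow> nat \<Rightarrow> 'a) \<Rightarrow> nat \<Rightarrow> nat \<Rightarrow> 'a" where
  "delete_rc k A = (\<lambda>i j. A (skip k i) (skip k j))"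

text \<open>Pf_l for an n x n matrix (n odd), l 1-based:
  (-1)^(l+1) Pf(A with row and column l deleted).\<close>
definition pf_minor :: "nat \<Rightarrow> nat \<Rightarrow> (nat \<Rightarrow> nat \<Rightarrow> 'a::comm_ring_1) \<Rightarrow> 'a" where
  "pf_minor n l A = (-1) ^ (l + 1) * pfaffian (n - 1) (delete_rc (l - 1) A)"

text \<open>The adjoint-like matrix check(phi) of an n x n alternating matrix (n even):
  entry (i,j), i<j, is (-1)^(i+j) Pf(phi with rows/cols i,j deleted),
  zero diagonal, skew-symmetric.  (Parity of i+j is the same for 0- and 1-based
  indices.)  Deleting rows/cols i<j: first delete j, then i.\<close>
definition pf_check :: "nat \<Rightarrow> (nat \<Rightarrow> nat \<Rightarrow> 'a::comm_ring_1) \<Rightarrow> nat \<Rightarrow> nat \<Rightarrow> 'a" where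
  "pf_check n A = (\<lambda>i j.
     if i < j then (-1) ^ (i + j) * pfaffian (n - 2) (delete_rc i (delete_rc j A))
     else if j < i then - ((-1) ^ (i + j) * pfaffian (n - 2) (delete_rc j (delete_rc i A)))
     else 0)"

definition sandwich :: "nat \<Rightarrow> (nat \<Rightarrow> nat \<Rightarrow> 'a::comm_ring_1) \<Rightarrow> (nat \<Rightarrow> nat \<Rightarrow> 'a) \<Rightarrow> nat \<Rightarrow> nat \<Rightarrow> 'a" where
  "sandwich m \<psi> B = (\<lambda>i j. \<Sum>k<m. \<Sum>l<m. \<psi> i k * B k l * \<psi> j l)"

definition block_d2 :: "nat \<Rightarrow> (nat \<Rightarrow> nat \<Rightarrow> 'a::comm_ring_1) \<Rightarrow> (nat \<Rightarrow> nat \<Rightarrow> 'a)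
    \<Rightarrow> (nat \<Rightarrow> nat \<Rightarrow> 'a) \<Rightarrow> nat \<Rightarrow> nat \<Rightarrow> 'a" where
  "block_d2 m \<phi> \<psi> \<Phi> = (\<lambda>i j.
     if i < m \<and> j < m then \<phi> i j
     else if i < m then \<psi> (j - m) i
     else if j < m then - \<psi> (i - m) j
     else \<Phi> (i - m) (j - m))"

end

theory Submission
  imports Defs
begin

text \<open>
  Deleting row/column \<open>m+l\<close> of \<open>d\<^sub>2\<close> leaves the \<open>(m+2) \<times> (m+2)\<close> matrix
  \<open>\<phi>\<close> bordered by two rows \<open>u, v\<close> of \<open>\<psi>\<close> and an entry \<open>c\<close> of \<open>\<Phi>\<close>.  Expanding its Pfaffian
  along the last column, and each minor once more along its (new) last column, gives
  \<open>Pf = u\<^sup>T \<check>\<phi> v + Pf(\<phi>) c\<close>; the entries of \<open>\<psi> \<check>\<phi> \<psi>\<^sup>T\<close> and of \<open>\<Phi>\<close> are exactly the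
  \<open>1 \<times> 1\<close> submaximal Pfaffians of the \<open>3 \<times> 3\<close> matrices in the statement.

  The Pfaffian only reads entries above the diagonal, so none of these
  identities needs the matrices to be alternating.
\<close>

definition matchings :: "nat \<Rightarrow> (nat \<Rightarrow> nat) set" where
  "matchings n = {\<sigma>. \<sigma> permutes {0..<n} \<and>
                 (\<forall>i < n div 2. \<sigma> (2*i) < \<sigma> (2*i+1)) \<and>
                 (\<forall>i. i + 1 < n div 2 \<longrightarrow> \<sigma> (2*i) < \<sigma> (2*i+2))}"

lemma pfaffian_matchings:
  "even n \<Longrightarrow> pfaffian n A =
     (\<Sum>\<sigma>\<in>matchings n. of_int (sign \<sigma>) * (\<Prod>i<n div 2. A (\<sigma> (2*i)) (\<sigma> (2*i+1))))"
  unfolding pfaffian_def matchings_def by simp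

lemma finite_matchings: "finite (matchings n)"
  by (rule finite_subset[OF _ finite_permutations[of "{0..<n}"]]) (auto simp: matchings_def)

lemma matching_permutes: "\<sigma> \<in> matchings n \<Longrightarrow> \<sigma> permutes {0..<n}"
  by (simp add: matchings_def)

lemma pfaffian_cong:
  assumes "\<And>i j. i < n \<Longrightarrow> j < n \<Longrightarrow> A i j = B i j"
  shows "pfaffian n A = pfaffian n B"
proof (cases "even n")
  case True
  have "A (\<sigma> (2*i)) (\<sigma> (2*i+1)) = B (\<sigma> (2*i)) (\<sigma> (2*i+1))"
    if "\<sigma> \<in> matchings n" "i < n div 2" for \<sigma> i
  proof -
    have "2*i < n" "2*i+1 < n" using that True by auto
    then show ?thesis
      using assms permutes_in_image[OF matching_permutes[OF that(1)]] by simp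
  qed
  then show ?thesis unfolding pfaffian_matchings[OF True] by (intro sum.cong prod.cong) auto
qed (simp add: pfaffian_def)

lemma pfaffian_0: "pfaffian 0 A = 1"
proof -
  have "matchings 0 = {id}" by (auto simp: matchings_def)
  then show ?thesis by (simp add: pfaffian_matchings)
qed

text \<open>The cyclic permutation \<open>1 \<mapsto> j\<close>, \<open>x \<mapsto> x - 1\<close> for \<open>2 \<le> x \<le> j\<close>, built as a product
  of \<open>j - 1\<close> adjacent transpositions so that its sign \<open>(-1)^(j+1)\<close> is evident.\<close>
fun rotate_front :: "nat \<Rightarrow> nat \<Rightarrow> nat" where
  "rotate_front 0 = id"
| "rotate_front (Suc j) =
     (if j = 0 then id else Transposition.transpose j (Suc j) \<circ> rotate_front j)"

lemma rotate_front_apply: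
  "1 \<le> j \<Longrightarrow> rotate_front j x = (if x = 1 then j else if 2 \<le> x \<and> x \<le> j then x - 1 else x)"
proof (induction j arbitrary: x)
  case (Suc j)
  then show ?case by (cases "j = 0") (auto simp: Transposition.transpose_def)
qed simp

lemma rotate_front_permutes: "1 \<le> j \<Longrightarrow> j < n \<Longrightarrow> rotate_front j permutes {0..<n}"
proof (induction j)
  case (Suc j)
  show ?case
  proof (cases "j = 0")
    case False
    have "Transposition.transpose j (Suc j) permutes {0..<n}"
      using Suc.prems by (intro permutes_swap_id) auto
    with Suc False show ?thesis by (simp del: o_apply add: permutes_compose)
  qed (auto simp: permutes_def)
qed simp

lemma sign_rotate_front: "1 \<le> j \<Longrightarrow> sign (rotate_front j) = (-1)^(j+1)"
proof (induction j)
  case (Suc j)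
  show ?case
  proof (cases "j = 0")
    case False
    have "permutation (rotate_front j)"
      using rotate_front_permutes[of j "Suc j"] False by (auto intro: permutes_imp_permutation)
    with Suc False show ?thesis
      by (simp del: o_apply add: sign_compose permutation_swap_id sign_swap_id)
  qed simp
qed simp

definition shift2 :: "nat \<Rightarrow> (nat \<Rightarrow> nat) \<Rightarrow> nat \<Rightarrow> nat" where
  "shift2 k \<tau> = map_permutation {0..<k} (\<lambda>x. x + 2) \<tau>"

lemma shift2_permutes_range: "\<tau> permutes {0..<k} \<Longrightarrow> shift2 k \<tau> permutes {2..<k+2}"
  unfolding shift2_def
  by (rule map_permutation_permutes, rule bij_betw_byWitness[where f'="\<lambda>x. x - 2"]) auto

lemma shift2_permutes: "\<tau> permutes {0..<k} \<Longrightarrow> shift2 k \<tau> permutes {0..<k+2}"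
  by (rule permutes_subset[OF shift2_permutes_range]) auto

lemma shift2_outside: "\<tau> permutes {0..<k} \<Longrightarrow> x < 2 \<or> k + 2 \<le> x \<Longrightarrow> shift2 k \<tau> x = x"
  by (rule permutes_not_in[OF shift2_permutes_range]) auto

lemma shift2_apply: "\<tau> permutes {0..<k} \<Longrightarrow> x < k \<Longrightarrow> shift2 k \<tau> (x + 2) = \<tau> x + 2"
  unfolding shift2_def by (rule map_permutation_apply) (auto simp: inj_on_def)

lemma sign_shift2: "\<tau> permutes {0..<k} \<Longrightarrow> sign (shift2 k \<tau>) = sign \<tau>"
  unfolding shift2_def by (rule sign_map_permutation) (auto simp: inj_on_def)

text \<open>For \<open>j > 0\<close>, \<open>rest_index j\<close> enumerates \<open>\<nat> - {0, j}\<close> in increasing order (the indices that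
  survive deleting rows/columns \<open>j\<close> and \<open>0\<close>); \<open>rest_position j\<close> is its inverse.\<close>
definition rest_index :: "nat \<Rightarrow> nat \<Rightarrow> nat" where
  "rest_index j y = skip j (Suc y)"

definition rest_position :: "nat \<Rightarrow> nat \<Rightarrow> nat" where
  "rest_position j z = (if z < j then z - 1 else z - 2)"

lemma rest_index_less_iff [simp]: "rest_index j a < rest_index j b \<longleftrightarrow> a < b"
  by (auto simp: rest_index_def skip_def)

lemma rest_index_eq_iff [simp]: "rest_index j a = rest_index j b \<longleftrightarrow> a = b"
  by (auto simp: rest_index_def skip_def)

lemma rest_index_pos: "0 < rest_index j a"
  by (simp add: rest_index_def skip_def)

lemma rest_index_bound: "rest_index j a < k + 2 \<Longrightarrow> j \<le> k + 1 \<Longrightarrow> a < k"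
  by (auto simp: rest_index_def skip_def split: if_splits)

lemma rest_index_position:
  "0 < j \<Longrightarrow> 0 < z \<Longrightarrow> z \<noteq> j \<Longrightarrow> rest_index j (rest_position j z) = z"
  by (auto simp: rest_index_def rest_position_def skip_def)

text \<open>The matching of \<open>{0..<k+2}\<close> that pairs \<open>0\<close> with \<open>j\<close> and matches the remaining
  indices according to the matching \<open>\<tau>\<close> of \<open>{0..<k}\<close>.\<close>
definition insert_pair :: "nat \<Rightarrow> nat \<Rightarrow> (nat \<Rightarrow> nat) \<Rightarrow> nat \<Rightarrow> nat" where
  "insert_pair k j \<tau> = rotate_front j \<circ> shift2 k \<tau>"

context
  fixes k j :: nat and \<tau> :: "nat \<Rightarrow> nat"
  assumes j: "1 \<le> j" "j \<le> k + 1" and \<tau>: "\<tau> permutes {0..<k}"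
begin

lemma insert_pair_0: "insert_pair k j \<tau> 0 = 0"
  using j \<tau> by (simp add: insert_pair_def shift2_outside rotate_front_apply)

lemma insert_pair_1: "insert_pair k j \<tau> (Suc 0) = j"
  using j \<tau> by (simp add: insert_pair_def shift2_outside rotate_front_apply)

lemma insert_pair_Suc_Suc: "x < k \<Longrightarrow> insert_pair k j \<tau> (Suc (Suc x)) = rest_index j (\<tau> x)"
  using j \<tau> shift2_apply[OF \<tau>, of x]
  by (simp add: insert_pair_def rotate_front_apply rest_index_def skip_def)

lemma insert_pair_outside: "k + 2 \<le> x \<Longrightarrow> insert_pair k j \<tau> x = x"
  using j \<tau> by (simp add: insert_pair_def shift2_outside rotate_front_apply)

lemma insert_pair_permutes: "insert_pair k j \<tau> permutes {0..<k+2}"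
  unfolding insert_pair_def using j \<tau>
  by (intro permutes_compose shift2_permutes rotate_front_permutes) auto

lemma sign_insert_pair: "sign (insert_pair k j \<tau>) = (-1)^(j+1) * sign \<tau>"
proof -
  have "permutation (rotate_front j)" "permutation (shift2 k \<tau>)"
    using rotate_front_permutes[of j "k+2"] shift2_permutes[OF \<tau>] j
    by (auto intro: permutes_imp_permutation)
  then show ?thesis
    by (simp only: insert_pair_def sign_compose sign_rotate_front[OF j(1)] sign_shift2[OF \<tau>])
qed

text \<open>Since \<open>rest_index j\<close> is monotone, \<open>insert_pair\<close> preserves and reflects the
  ordering conditions of a matching.\<close>
lemma insert_pair_matching_iff:
  assumes "even k"
  shows "insert_pair k j \<tau> \<in> matchings (k+2) \<longleftrightarrow> \<tau> \<in> matchings k"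
proof -
  let ?g = "insert_pair k j \<tau>"
  have shift: "?g (2 * Suc i + d) = rest_index j (\<tau> (2*i + d))" if "2*i + d < k" for i d
    using insert_pair_Suc_Suc[OF that] by simp
  have pairs: "?g (2 * Suc i) < ?g (2 * Suc i + 1) \<longleftrightarrow> \<tau> (2*i) < \<tau> (2*i+1)"
    if "i < k div 2" for i
    using that assms shift[of i 0] shift[of i 1] by auto
  have chain: "?g (2 * Suc i) < ?g (2 * Suc i + 2) \<longleftrightarrow> \<tau> (2*i) < \<tau> (2*i+2)"
    if "i + 1 < k div 2" for i
    using that assms shift[of i 0] shift[of i 2] by auto
  have first: "?g 0 < ?g 1" "0 < k \<Longrightarrow> ?g 0 < ?g (Suc (Suc 0))"
    using j insert_pair_Suc_Suc[of 0] rest_index_pos by (simp_all add: insert_pair_0 insert_pair_1)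
  have "(\<forall>i<k div 2 + 1. ?g (2*i) < ?g (2*i+1)) \<longleftrightarrow> (\<forall>i<k div 2. \<tau> (2*i) < \<tau> (2*i+1))"
    using first(1) pairs by (simp only: Suc_eq_plus1[symmetric] All_less_Suc2) simp
  moreover have "(\<forall>i. i + 1 < k div 2 + 1 \<longrightarrow> ?g (2*i) < ?g (2*i+2))
      \<longleftrightarrow> (\<forall>i. i + 1 < k div 2 \<longrightarrow> \<tau> (2*i) < \<tau> (2*i+2))"
  proof -
    have "(\<forall>i. i + 1 < k div 2 + 1 \<longrightarrow> ?g (2*i) < ?g (2*i+2))
        \<longleftrightarrow> (\<forall>i < k div 2. ?g (2*i) < ?g (2*i+2))" by auto
    also have "\<dots> \<longleftrightarrow> (\<forall>i. i + 1 < k div 2 \<longrightarrow> ?g (2 * Suc i) < ?g (2 * Suc i + 2))"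
      using first(2) assms by (cases "k div 2") (auto simp: All_less_Suc2)
    finally show ?thesis using chain by auto
  qed
  ultimately show ?thesis
    using assms insert_pair_permutes \<tau> by (simp add: matchings_def)
qed

end

lemma matching_chain:
  assumes "\<sigma> \<in> matchings n" "i < n div 2"
  shows "\<sigma> 0 \<le> \<sigma> (2*i)"
  using assms(2)
proof (induction i)
  case (Suc i)
  then have "\<sigma> (2*i) < \<sigma> (2*i+2)" using assms(1) by (simp add: matchings_def)
  with Suc show ?case by simp
qed simp

lemma matching_fixes_0:
  assumes \<sigma>: "\<sigma> \<in> matchings n" and n: "even n" "0 < n"
  shows "\<sigma> 0 = 0"
proof -
  have "0 \<in> \<sigma> ` {0..<n}" using permutes_image[OF matching_permutes[OF \<sigma>]] n by simp
  then obtain x where x: "x < n" "\<sigma> x = 0" by auto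
  have "x div 2 < n div 2" using x n by auto
  show ?thesis
  proof (cases "even x")
    case True
    then show ?thesis using matching_chain[OF \<sigma> \<open>x div 2 < n div 2\<close>] x by simp
  next
    case False
    then obtain h where h: "x = 2*h + 1" by (rule oddE)
    then have "\<sigma> (2*h) < \<sigma> x" using \<sigma> \<open>x div 2 < n div 2\<close> by (simp add: matchings_def)
    then show ?thesis using x by simp
  qed
qed

text \<open>Every matching of \<open>{0..<k+2}\<close> arises from \<open>insert_pair\<close>: \<open>j\<close> is the partner of
  \<open>0\<close>, and \<open>\<tau>\<close> is read off from the remaining pairs.\<close>
lemma matching_decompose:
  assumes k: "even k" and \<sigma>: "\<sigma> \<in> matchings (k+2)"
  obtains j \<tau> where "j \<in> {1..k+1}" "\<tau> \<in> matchings k" "\<sigma> = insert_pair k j \<tau>"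
proof -
  have sp: "\<sigma> permutes {0..<k+2}" using \<sigma> by (rule matching_permutes)
  have inj: "inj \<sigma>" using sp by (rule permutes_inj)
  have img: "\<And>x. x < k+2 \<Longrightarrow> \<sigma> x < k+2" using permutes_in_image[OF sp] by simp
  have \<sigma>0: "\<sigma> 0 = 0" using matching_fixes_0[OF \<sigma>] k by simp
  define j where "j = \<sigma> 1"
  have "\<sigma> 1 \<noteq> \<sigma> 0" using inj by (simp add: inj_eq)
  then have j: "1 \<le> j" "j \<le> k + 1" using \<sigma>0 img[of 1] unfolding j_def by auto
  define \<tau> where "\<tau> x = (if x < k then rest_position j (\<sigma> (Suc (Suc x))) else x)" for x
  have \<tau>_index: "rest_index j (\<tau> x) = \<sigma> (Suc (Suc x))" if "x < k" for x
  proof -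
    have "\<sigma> (Suc (Suc x)) \<noteq> \<sigma> 0" "\<sigma> (Suc (Suc x)) \<noteq> \<sigma> 1" using inj by (auto simp: inj_eq)
    then show ?thesis using that j \<sigma>0 by (simp add: \<tau>_def rest_index_position j_def)
  qed
  have \<tau>_range: "\<tau> x < k" if "x < k" for x
    using \<tau>_index[OF that] img[of "Suc (Suc x)"] that rest_index_bound[OF _ j(2)] by simp
  have "inj_on \<tau> {0..<k}"
    using \<tau>_index inj by (intro inj_onI) (metis atLeastLessThan_iff inj_eq nat.inject)
  moreover have "\<tau> ` {0..<k} = {0..<k}"
    using \<tau>_range \<open>inj_on \<tau> {0..<k}\<close> by (intro endo_inj_surj) auto
  ultimately have \<tau>p: "\<tau> permutes {0..<k}"
    by (intro bij_imp_permutes) (auto simp: bij_betw_def \<tau>_def)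
  have "\<sigma> = insert_pair k j \<tau>"
  proof
    fix x
    consider "x = 0" | "x = 1" | y where "x = Suc (Suc y)" "y < k" | "k + 2 \<le> x"
      by (metis One_nat_def add_2_eq_Suc' add_less_cancel_right not0_implies_Suc not_less)
    then show "\<sigma> x = insert_pair k j \<tau> x"
      using insert_pair_0[OF j \<tau>p] insert_pair_1[OF j \<tau>p] insert_pair_Suc_Suc[OF j \<tau>p]
        insert_pair_outside[OF j \<tau>p] permutes_not_in[OF sp] \<tau>_index \<sigma>0
      by cases (auto simp: j_def)
  qed
  moreover have "\<tau> \<in> matchings k"
    using insert_pair_matching_iff[OF j \<tau>p k] \<sigma> \<open>\<sigma> = insert_pair k j \<tau>\<close> by simp
  ultimately show ?thesis using that j by simp
qed

lemma insert_pair_inj: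
  assumes "1 \<le> j" "j \<le> k + 1" "\<tau> permutes {0..<k}" "1 \<le> j'" "j' \<le> k + 1" "\<tau>' permutes {0..<k}"
    and eq: "insert_pair k j \<tau> = insert_pair k j' \<tau>'"
  shows "j = j' \<and> \<tau> = \<tau>'"
proof -
  have jj: "j = j'" using insert_pair_1[OF assms(1-3)] insert_pair_1[OF assms(4-6)] eq by metis
  have "\<tau> x = \<tau>' x" for x
  proof (cases "x < k")
    case True
    then show ?thesis
      using insert_pair_Suc_Suc[OF assms(1-3) True] insert_pair_Suc_Suc[OF assms(4-6) True] eq jj
      by simp
  next
    case False
    then show ?thesis using permutes_not_in[OF assms(3)] permutes_not_in[OF assms(6)] by simp
  qed
  then show ?thesis using jj by auto
qed

lemma insert_pair_bij:
  assumes "even k"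
  shows "bij_betw (\<lambda>(j, \<tau>). insert_pair k j \<tau>) (SIGMA j:{1..k+1}. matchings k) (matchings (k+2))"
proof (rule bij_betw_imageI)
  show "inj_on (\<lambda>(j, \<tau>). insert_pair k j \<tau>) (SIGMA j:{1..k+1}. matchings k)"
  proof (rule inj_onI)
    fix p p' assume "p \<in> (SIGMA j:{1..k+1}. matchings k)" "p' \<in> (SIGMA j:{1..k+1}. matchings k)"
      and "(\<lambda>(j, \<tau>). insert_pair k j \<tau>) p = (\<lambda>(j, \<tau>). insert_pair k j \<tau>) p'"
    moreover obtain j \<tau> j' \<tau>' where "p = (j, \<tau>)" "p' = (j', \<tau>')" by fastforce
    ultimately show "p = p'"
      using insert_pair_inj[of j k \<tau> j' \<tau>'] by (simp add: matching_permutes)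
  qed
  show "(\<lambda>(j, \<tau>). insert_pair k j \<tau>) ` (SIGMA j:{1..k+1}. matchings k) = matchings (k+2)"
  proof (intro equalityI subsetI)
    fix \<sigma> assume "\<sigma> \<in> matchings (k+2)"
    then obtain j \<tau> where "j \<in> {1..k+1}" "\<tau> \<in> matchings k" "\<sigma> = insert_pair k j \<tau>"
      using matching_decompose[OF assms] by blast
    then show "\<sigma> \<in> (\<lambda>(j, \<tau>). insert_pair k j \<tau>) ` (SIGMA j:{1..k+1}. matchings k)" by force
  qed (use insert_pair_matching_iff[OF _ _ matching_permutes assms] in auto)
qed

lemma delete_rc_apply: "delete_rc k A i j = A (skip k i) (skip k j)"
  by (simp add: delete_rc_def)

lemma delete_0_rc_apply:
  "delete_rc 0 (delete_rc j A) a b = A (rest_index j a) (rest_index j b)"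
  by (simp add: delete_rc_def rest_index_def skip_def)

lemma insert_pair_weight:
  fixes A :: "nat \<Rightarrow> nat \<Rightarrow> 'a::comm_ring_1"
  assumes k: "even k" and j: "j \<in> {1..k+1}" and \<tau>: "\<tau> \<in> matchings k"
  defines "g \<equiv> insert_pair k j \<tau>"
  shows "of_int (sign g) * (\<Prod>i<(k+2) div 2. A (g (2*i)) (g (2*i+1)))
       = (-1)^(j+1) * A 0 j * (of_int (sign \<tau>) *
           (\<Prod>i<k div 2. delete_rc 0 (delete_rc j A) (\<tau> (2*i)) (\<tau> (2*i+1))))"
proof -
  have j': "1 \<le> j" "j \<le> k + 1" and \<tau>p: "\<tau> permutes {0..<k}"
    using j matching_permutes[OF \<tau>] by auto
  have "(\<Prod>i<(k+2) div 2. A (g (2*i)) (g (2*i+1)))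
      = A (g 0) (g 1) * (\<Prod>i<k div 2. A (g (2 * Suc i)) (g (2 * Suc i + 1)))"
    by (simp add: prod.lessThan_Suc_shift del: prod.lessThan_Suc)
  also have "(\<Prod>i<k div 2. A (g (2 * Suc i)) (g (2 * Suc i + 1)))
      = (\<Prod>i<k div 2. delete_rc 0 (delete_rc j A) (\<tau> (2*i)) (\<tau> (2*i+1)))"
  proof (rule prod.cong[OF refl])
    fix i assume "i \<in> {..<k div 2}"
    then have "2*i < k" "2*i+1 < k" using k by auto
    then show "A (g (2 * Suc i)) (g (2 * Suc i + 1))
        = delete_rc 0 (delete_rc j A) (\<tau> (2*i)) (\<tau> (2*i+1))"
      using insert_pair_Suc_Suc[OF j' \<tau>p] by (simp add: g_def delete_0_rc_apply)
  qed
  finally show ?thesis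
    using insert_pair_0[OF j' \<tau>p] insert_pair_1[OF j' \<tau>p]
    by (simp add: g_def sign_insert_pair[OF j' \<tau>p] mult_ac)
qed

lemma pfaffian_first_row:
  fixes A :: "nat \<Rightarrow> nat \<Rightarrow> 'a::comm_ring_1"
  assumes k: "even k"
  shows "pfaffian (k+2) A
       = (\<Sum>j\<in>{1..k+1}. (-1)^(j+1) * A 0 j * pfaffian k (delete_rc 0 (delete_rc j A)))"
proof -
  define weight :: "(nat \<Rightarrow> nat) \<Rightarrow> 'a"
    where "weight \<sigma> = of_int (sign \<sigma>) * (\<Prod>i<(k+2) div 2. A (\<sigma> (2*i)) (\<sigma> (2*i+1)))" for \<sigma>
  have "pfaffian (k+2) A = sum weight (matchings (k+2))"
    unfolding weight_def using k by (intro pfaffian_matchings) simp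
  also have "\<dots> = (\<Sum>(j, \<tau>)\<in>(SIGMA j:{1..k+1}. matchings k). weight (insert_pair k j \<tau>))"
    using sum.reindex_bij_betw[OF insert_pair_bij[OF k], of weight] by (simp add: case_prod_beta')
  also have "\<dots> = (\<Sum>j\<in>{1..k+1}. \<Sum>\<tau>\<in>matchings k. weight (insert_pair k j \<tau>))"
    by (rule sum.Sigma[symmetric]) (auto simp: finite_matchings)
  also have "\<dots> = (\<Sum>j\<in>{1..k+1}. (-1)^(j+1) * A 0 j * pfaffian k (delete_rc 0 (delete_rc j A)))"
  proof (rule sum.cong[OF refl])
    fix j assume j: "j \<in> {1..k+1}"
    have "(\<Sum>\<tau>\<in>matchings k. weight (insert_pair k j \<tau>))
        = (\<Sum>\<tau>\<in>matchings k. (-1)^(j+1) * A 0 j * (of_int (sign \<tau>) *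
             (\<Prod>i<k div 2. delete_rc 0 (delete_rc j A) (\<tau> (2*i)) (\<tau> (2*i+1)))))"
      unfolding weight_def by (intro sum.cong refl insert_pair_weight[OF k j])
    then show "(\<Sum>\<tau>\<in>matchings k. weight (insert_pair k j \<tau>))
        = (-1)^(j+1) * A 0 j * pfaffian k (delete_rc 0 (delete_rc j A))"
      by (simp only: pfaffian_matchings[OF k] sum_distrib_left)
  qed
  finally show ?thesis .
qed

text \<open>For \<open>0 < i \<noteq> j\<close>, \<open>skip_pair i j\<close> enumerates \<open>\<nat> - {0, i, j}\<close>; the two lemmas below
  identify it with the re-indexing produced by deleting the indices \<open>0, i, j\<close> in either order.\<close>
definition skip_pair :: "nat \<Rightarrow> nat \<Rightarrow> nat \<Rightarrow> nat" where
  "skip_pair i j x = skip (max i j) (skip (min i j) (Suc x))"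

lemma rest_index_skip:
  "1 \<le> j \<Longrightarrow> rest_index j (skip i x) = skip_pair (rest_index j i) j x"
  by (auto simp: skip_pair_def rest_index_def skip_def)

lemma skip_rest_index:
  "1 \<le> i \<Longrightarrow> 1 \<le> j \<Longrightarrow> skip i (rest_index j x) = skip_pair i (skip i j) x"
  by (auto simp: skip_pair_def rest_index_def skip_def)

text \<open>The term of the double expansion of \<open>pfaffian (k+2) A\<close> along row \<open>0\<close> and column
  \<open>k+1\<close> in which \<open>0\<close> is paired with \<open>j\<close> and \<open>i\<close> with \<open>k+1\<close>.\<close>
definition double_term :: "nat \<Rightarrow> (nat \<Rightarrow> nat \<Rightarrow> 'a::comm_ring_1) \<Rightarrow> nat \<Rightarrow> nat \<Rightarrow> 'a" where
  "double_term k A i j = (if i < j then 1 else -1) * (-1)^(i+j) *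
     (A 0 j * A i (k+1) * pfaffian (k-2) (\<lambda>x y. A (skip_pair i j x) (skip_pair i j y)))"

lemma first_row_then_last_column:
  fixes A :: "nat \<Rightarrow> nat \<Rightarrow> 'a::comm_ring_1"
  assumes k: "2 \<le> k" and j: "j \<in> {1..k}"
    and last_column: "\<And>B::nat \<Rightarrow> nat \<Rightarrow> 'a.
       pfaffian k B = (\<Sum>i<k-1. (-1)^i * B i (k-1) * pfaffian (k-2) (delete_rc i B))"
  shows "(-1)^(j+1) * A 0 j * pfaffian k (delete_rc 0 (delete_rc j A))
       = (\<Sum>i\<in>{1..k}-{j}. double_term k A i j)"
proof -
  let ?B = "delete_rc 0 (delete_rc j A)"
  have "(-1)^(j+1) * A 0 j * pfaffian k ?B
      = (\<Sum>i'<k-1. (-1)^(j+1) * A 0 j *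
           ((-1)^i' * ?B i' (k-1) * pfaffian (k-2) (delete_rc i' ?B)))"
    by (simp add: last_column sum_distrib_left)
  also have "\<dots> = (\<Sum>i'<k-1. double_term k A (rest_index j i') j)"
  proof (rule sum.cong[OF refl])
    fix i' assume i': "i' \<in> {..<k-1}"
    have entry: "?B i' (k-1) = A (rest_index j i') (k+1)"
      using j k i' by (simp add: delete_0_rc_apply rest_index_def skip_def)
    have minor: "pfaffian (k-2) (delete_rc i' ?B) = pfaffian (k-2)
        (\<lambda>x y. A (skip_pair (rest_index j i') j x) (skip_pair (rest_index j i') j y))"
      using rest_index_skip[of j] j
      by (intro pfaffian_cong) (simp only: delete_rc_apply[of i'] delete_0_rc_apply, simp)
    have sign: "(-1)^(j+1) * (-1)^i' = (if rest_index j i' < j then 1 else -1) *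
        ((-1)^(rest_index j i' + j) :: 'a)"
      by (auto simp: rest_index_def skip_def power_add)
    show "(-1)^(j+1) * A 0 j * ((-1)^i' * ?B i' (k-1) * pfaffian (k-2) (delete_rc i' ?B))
        = double_term k A (rest_index j i') j"
      unfolding double_term_def entry minor sign[symmetric] by (simp only: ac_simps)
  qed
  also have "\<dots> = (\<Sum>i\<in>{1..k}-{j}. double_term k A i j)"
    by (rule sum.reindex_bij_betw, rule bij_betw_byWitness[where f'="rest_position j"])
       (use j k in \<open>auto simp: rest_index_def rest_position_def skip_def\<close>)
  finally show ?thesis .
qed

lemma last_column_then_first_row:
  fixes A :: "nat \<Rightarrow> nat \<Rightarrow> 'a::comm_ring_1"
  assumes k: "even k" "2 \<le> k" and i: "i \<in> {1..k}"
  shows "(-1)^i * A i (k+1) * pfaffian k (delete_rc i A) = (\<Sum>j\<in>{1..k}-{i}. double_term k A i j)"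
proof -
  let ?C = "delete_rc i A"
  have first_row: "pfaffian k C = (\<Sum>j'\<in>{1..k-1}.
      (-1)^(j'+1) * C 0 j' * pfaffian (k-2) (delete_rc 0 (delete_rc j' C)))"
    for C :: "nat \<Rightarrow> nat \<Rightarrow> 'a"
  proof -
    have "k - 2 + 2 = k" "k - 2 + 1 = k - 1" using k by auto
    then show ?thesis using pfaffian_first_row[of "k-2" C] k by simp
  qed
  have "(-1)^i * A i (k+1) * pfaffian k ?C = (\<Sum>j'\<in>{1..k-1}. (-1)^i * A i (k+1) *
      ((-1)^(j'+1) * ?C 0 j' * pfaffian (k-2) (delete_rc 0 (delete_rc j' ?C))))"
    by (simp add: first_row sum_distrib_left)
  also have "\<dots> = (\<Sum>j'\<in>{1..k-1}. double_term k A i (skip i j'))"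
  proof (rule sum.cong[OF refl])
    fix j' assume j': "j' \<in> {1..k-1}"
    have entry: "?C 0 j' = A 0 (skip i j')" using i by (simp add: delete_rc_def skip_def)
    have minor: "pfaffian (k-2) (delete_rc 0 (delete_rc j' ?C))
        = pfaffian (k-2) (\<lambda>x y. A (skip_pair i (skip i j') x) (skip_pair i (skip i j') y))"
      using skip_rest_index[of i j'] i j'
      by (intro pfaffian_cong) (simp only: delete_0_rc_apply delete_rc_apply[of i], simp)
    have sign: "(-1)^i * (-1)^(j'+1)
        = (if i < skip i j' then 1 else -1) * ((-1)^(i + skip i j') :: 'a)"
      by (auto simp: skip_def power_add)
    show "(-1)^i * A i (k+1) * ((-1)^(j'+1) * ?C 0 j'
        * pfaffian (k-2) (delete_rc 0 (delete_rc j' ?C))) = double_term k A i (skip i j')"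
      unfolding double_term_def entry minor sign[symmetric] by (simp only: ac_simps)
  qed
  also have "\<dots> = (\<Sum>j\<in>{1..k}-{i}. double_term k A i j)"
    by (rule sum.reindex_bij_betw,
        rule bij_betw_byWitness[where f'="\<lambda>j. if j < i then j else j - 1"])
       (use i k in \<open>auto simp: skip_def\<close>)
  finally show ?thesis .
qed

lemma sum_swap_off_diagonal:
  assumes "finite S"
  shows "(\<Sum>j\<in>S. \<Sum>i\<in>S-{j}. F i j) = (\<Sum>i\<in>S. \<Sum>j\<in>S-{i}. F i j)"
proof -
  have "(\<Sum>j\<in>S. \<Sum>i\<in>S-{j}. F i j) = (\<Sum>j\<in>S. \<Sum>i\<in>{i\<in>S. i \<noteq> j}. F i j)"
    by (simp add: set_diff_eq)
  also have "\<dots> = (\<Sum>i\<in>S. \<Sum>j\<in>{j\<in>S. i \<noteq> j}. F i j)"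
    by (rule sum.swap_restrict[OF assms assms])
  also have "\<dots> = (\<Sum>i\<in>S. \<Sum>j\<in>S-{i}. F i j)"
    by (simp add: set_diff_eq eq_commute)
  finally show ?thesis .
qed

text \<open>If the last-column expansion holds in size \<open>k\<close>, it holds in size \<open>k+2\<close>: both sides
  equal the sum of all double terms, plus the common term pairing \<open>0\<close> with \<open>k+1\<close>.\<close>
lemma pfaffian_last_column_step:
  fixes A :: "nat \<Rightarrow> nat \<Rightarrow> 'a::comm_ring_1"
  assumes k: "even k" "2 \<le> k"
    and last_column: "\<And>B::nat \<Rightarrow> nat \<Rightarrow> 'a.
       pfaffian k B = (\<Sum>i<k-1. (-1)^i * B i (k-1) * pfaffian (k-2) (delete_rc i B))"
  shows "pfaffian (k+2) A = (\<Sum>i<k+1. (-1)^i * A i (k+1) * pfaffian k (delete_rc i A))"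
proof -
  define S where "S = {1..k}"
  have corner: "pfaffian k (delete_rc 0 (delete_rc (k+1) A)) = pfaffian k (delete_rc 0 A)"
    by (rule pfaffian_cong) (simp add: delete_rc_def skip_def)
  have "pfaffian (k+2) A = (\<Sum>j\<in>S. (-1)^(j+1) * A 0 j * pfaffian k (delete_rc 0 (delete_rc j A)))
      + A 0 (k+1) * pfaffian k (delete_rc 0 A)"
    using pfaffian_first_row[OF k(1), of A] k(1) corner by (simp add: S_def)
  also have "(\<Sum>j\<in>S. (-1)^(j+1) * A 0 j * pfaffian k (delete_rc 0 (delete_rc j A)))
      = (\<Sum>j\<in>S. \<Sum>i\<in>S-{j}. double_term k A i j)"
    using first_row_then_last_column[OF k(2) _ last_column] by (simp add: S_def)
  also have "\<dots> = (\<Sum>i\<in>S. \<Sum>j\<in>S-{i}. double_term k A i j)"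
    by (rule sum_swap_off_diagonal) (simp add: S_def)
  also have "\<dots> = (\<Sum>i\<in>S. (-1)^i * A i (k+1) * pfaffian k (delete_rc i A))"
    unfolding S_def by (rule sum.cong[OF refl], rule last_column_then_first_row[OF k, symmetric])
  also have "\<dots> + A 0 (k+1) * pfaffian k (delete_rc 0 A)
      = (\<Sum>i<k+1. (-1)^i * A i (k+1) * pfaffian k (delete_rc i A))"
  proof -
    have "{..<k+1} = insert 0 S" by (auto simp: S_def)
    then show ?thesis by (simp add: S_def)
  qed
  finally show ?thesis .
qed

lemma pfaffian_last_column:
  fixes A :: "nat \<Rightarrow> nat \<Rightarrow> 'a::comm_ring_1"
  assumes "even k"
  shows "pfaffian (k+2) A = (\<Sum>i<k+1. (-1)^i * A i (k+1) * pfaffian k (delete_rc i A))"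
proof -
  obtain h where "k = 2*h" using assms by blast
  moreover have "pfaffian (2*h+2) B
      = (\<Sum>i<2*h+1. (-1)^i * B i (2*h+1) * pfaffian (2*h) (delete_rc i B))" for B :: "nat \<Rightarrow> nat \<Rightarrow> 'a"
  proof (induction h arbitrary: B)
    case 0
    show ?case using pfaffian_first_row[of 0 B] by (simp add: pfaffian_0)
  next
    case (Suc h)
    have "pfaffian (2*h+2+2) B
        = (\<Sum>i<2*h+2+1. (-1)^i * B i (2*h+2+1) * pfaffian (2*h+2) (delete_rc i B))"
      by (rule pfaffian_last_column_step) (use Suc.IH in simp_all)
    then show ?case by (simp add: algebra_simps)
  qed
  ultimately show ?thesis by simp
qed

lemma pfaffian_2: "pfaffian 2 A = A 0 1"
  using pfaffian_last_column[of 0 A] by (simp add: pfaffian_0 numeral_2_eq_2)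

lemma bordered_minor_expansion:
  fixes M \<phi> :: "nat \<Rightarrow> nat \<Rightarrow> 'a::comm_ring_1" and u :: "nat \<Rightarrow> 'a"
  assumes m: "even m" and i: "i < m"
    and M\<phi>: "\<And>a b. a < m \<Longrightarrow> b < m \<Longrightarrow> M a b = \<phi> a b"
    and Mu: "\<And>a. a < m \<Longrightarrow> M a m = u a"
  shows "(-1)^i * pfaffian m (delete_rc i M) = (\<Sum>a<m. u a * pf_check m \<phi> a i)"
proof -
  have expand: "pfaffian m B = (\<Sum>k<m-1. (-1)^k * B k (m-1) * pfaffian (m-2) (delete_rc k B))"
    for B :: "nat \<Rightarrow> nat \<Rightarrow> 'a"
  proof -
    have "m - 2 + 2 = m" "m - 2 + 1 = m - 1" using m i by presburger+
    then show ?thesis using pfaffian_last_column[of "m-2" B] m by simp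
  qed
  have bound: "skip i (skip k x) < m" if "k < m - 1" "x < m - 2" for k x
    using that i by (auto simp: skip_def)
  have "(-1)^i * pfaffian m (delete_rc i M)
      = (\<Sum>k<m-1. (-1)^i *
           ((-1)^k * delete_rc i M k (m-1) * pfaffian (m-2) (delete_rc k (delete_rc i M))))"
    by (simp add: expand sum_distrib_left)
  also have "\<dots> = (\<Sum>k<m-1. u (skip i k) * pf_check m \<phi> (skip i k) i)"
  proof (rule sum.cong[OF refl])
    fix k assume k: "k \<in> {..<m-1}"
    have "skip i (m-1) = m" "skip i k < m" using i k by (auto simp: skip_def)
    then have entry: "delete_rc i M k (m-1) = u (skip i k)" by (simp add: delete_rc_apply Mu)
    show "(-1)^i * ((-1)^k * delete_rc i M k (m-1) * pfaffian (m-2) (delete_rc k (delete_rc i M)))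
        = u (skip i k) * pf_check m \<phi> (skip i k) i"
    proof (cases "k < i")
      case True
      have "pfaffian (m-2) (delete_rc k (delete_rc i M))
          = pfaffian (m-2) (delete_rc k (delete_rc i \<phi>))"
        using k by (intro pfaffian_cong) (simp add: delete_rc_def M\<phi> bound)
      then show ?thesis
        unfolding entry using True by (simp add: pf_check_def skip_def power_add mult_ac)
    next
      case False
      have "pfaffian (m-2) (delete_rc k (delete_rc i M))
          = pfaffian (m-2) (delete_rc i (delete_rc (Suc k) \<phi>))"
        using k False by (intro pfaffian_cong) (simp add: delete_rc_def M\<phi> bound skip_def)
      then show ?thesis
        unfolding entry using False by (simp add: pf_check_def skip_def power_add mult_ac)
    qed
  qed
  also have "\<dots> = (\<Sum>a\<in>{..<m}-{i}. u a * pf_check m \<phi> a i)"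
    by (rule sum.reindex_bij_betw,
        rule bij_betw_byWitness[where f'="\<lambda>a. if a < i then a else a - 1"])
       (use i in \<open>auto simp: skip_def\<close>)
  also have "\<dots> = (\<Sum>a<m. u a * pf_check m \<phi> a i)"
    using i by (simp add: sum.remove[of "{..<m}" i] pf_check_def)
  finally show ?thesis .
qed

lemma pfaffian_bordered:
  fixes M \<phi> :: "nat \<Rightarrow> nat \<Rightarrow> 'a::comm_ring_1" and u v :: "nat \<Rightarrow> 'a"
  assumes m: "even m"
    and M\<phi>: "\<And>a b. a < m \<Longrightarrow> b < m \<Longrightarrow> M a b = \<phi> a b"
    and Mu: "\<And>a. a < m \<Longrightarrow> M a m = u a"
    and Mv: "\<And>a. a < m \<Longrightarrow> M a (m+1) = v a"
    and Mc: "M m (m+1) = c"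
  shows "pfaffian (m+2) M = (\<Sum>a<m. \<Sum>b<m. u a * pf_check m \<phi> a b * v b) + pfaffian m \<phi> * c"
proof -
  have "pfaffian m (delete_rc m M) = pfaffian m \<phi>"
    by (rule pfaffian_cong) (simp add: delete_rc_def skip_def M\<phi>)
  then have "pfaffian (m+2) M
      = (\<Sum>i<m. (-1)^i * M i (m+1) * pfaffian m (delete_rc i M)) + pfaffian m \<phi> * c"
    using pfaffian_last_column[OF m, of M] m Mc by (simp add: mult_ac)
  also have "(\<Sum>i<m. (-1)^i * M i (m+1) * pfaffian m (delete_rc i M))
      = (\<Sum>i<m. v i * (\<Sum>a<m. u a * pf_check m \<phi> a i))"
  proof (rule sum.cong[OF refl])
    fix i assume "i \<in> {..<m}"
    then have "i < m" by simp
    then show "(-1)^i * M i (m+1) * pfaffian m (delete_rc i M)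
        = v i * (\<Sum>a<m. u a * pf_check m \<phi> a i)"
      using bordered_minor_expansion[where M=M and \<phi>=\<phi> and u=u, OF m \<open>i < m\<close> M\<phi> Mu] Mv[of i]
      by (simp add: mult_ac)
  qed
  also have "\<dots> = (\<Sum>b<m. \<Sum>a<m. u a * pf_check m \<phi> a b * v b)"
    by (simp add: sum_distrib_left mult_ac)
  also have "\<dots> = (\<Sum>a<m. \<Sum>b<m. u a * pf_check m \<phi> a b * v b)"
    by (rule sum.swap)
  finally show ?thesis .
qed

lemma pf_minor_3: "pf_minor 3 l B = (-1)^(l+1) * B (skip (l-1) 0) (skip (l-1) 1)"
  by (simp add: pf_minor_def pfaffian_2 delete_rc_def)

text \<open>Deleting row/column \<open>m+l\<close> of \<open>d\<^sub>2\<close> leaves \<open>\<phi>\<close> bordered by the two rows of \<open>\<psi>\<close>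
  other than the \<open>l\<close>-th one, with corner the corresponding entry of \<open>\<Phi>\<close>.\<close>
theorem mainTheorem7:
  fixes m :: nat
    and \<phi> \<psi> \<Phi> :: "nat \<Rightarrow> nat \<Rightarrow> 'a::comm_ring_1"
    and l :: nat
  assumes "even m"
    and "alternating m \<phi>"
    and "alternating 3 \<Phi>"
    and "l \<in> {1, 2, 3}"
  shows "pf_minor (m + 3) (m + l) (block_d2 m \<phi> \<psi> \<Phi>)
       = pf_minor 3 l (sandwich m \<psi> (pf_check m \<phi>))
         + pfaffian m \<phi> * pf_minor 3 l \<Phi>"
proof -
  define M where "M = delete_rc (m+l-1) (block_d2 m \<phi> \<psi> \<Phi>)"
  define p where "p = skip (l-1) 0"
  define q where "q = skip (l-1) 1"
  have l: "l = 1 \<or> l = 2 \<or> l = 3" using assms(4) by auto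
  have "pfaffian (m+2) M = sandwich m \<psi> (pf_check m \<phi>) p q + pfaffian m \<phi> * \<Phi> p q"
    unfolding sandwich_def
  proof (rule pfaffian_bordered[OF assms(1)])
    show "M a b = \<phi> a b" if "a < m" "b < m" for a b
      using l that by (auto simp: M_def delete_rc_def skip_def block_d2_def)
    show "M a m = \<psi> p a" if "a < m" for a
      using l that by (auto simp: M_def delete_rc_def skip_def block_d2_def p_def)
    show "M a (m+1) = \<psi> q a" if "a < m" for a
      using l that by (auto simp: M_def delete_rc_def skip_def block_d2_def q_def numeral_2_eq_2)
    show "M m (m+1) = \<Phi> p q"
      using l by (auto simp: M_def delete_rc_def skip_def block_d2_def p_def q_def numeral_2_eq_2)
  qed
  moreover have "pf_minor (m+3) (m+l) (block_d2 m \<phi> \<psi> \<Phi>) = (-1)^(l+1) * pfaffian (m+2) M"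
    using assms(1) by (simp add: pf_minor_def M_def power_add)
  ultimately show ?thesis by (simp add: pf_minor_3 p_def q_def algebra_simps)
qed

end
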